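(* Let $p$ be any sensible $\lambda$-PPM on the set $\Lambda$ of $\lambda$-terms, and let $p_{\mathrm{ctx}}$ be the contextual partial metric defined from an arbitrary enumeration $(\mathtt C_n[-])_{n\in\mathbb N}$ of all contexts by $p_{\mathrm{ctx}}(M,N)=\sum\{2^{-n}\mid \mathtt C_n[M]\text{ unsolvable or }\mathtt C_n[N]\text{ unsolvable}\}$. Then $p\sqsubseteq p_{\mathrm{ctx}}$, i.e. $\mathcal O_{p_{\mathrm{ctx}}}(\Lambda)\subseteq\mathcal O_p(\Lambda)$.
   Context: Contexts are $\lambda$-terms with one hole; solvable means having a head normal form. A partial pseudo-metric (PPM) on $X$ is $p:X\times X\to[0,+\infty]$ with $p(x,x)\leq p(x,y)$, $p(x,y)=p(y,x)$, $p(x,y)\leq p(x,z)+p(z,y)-p(z,z)$. Preorder: $x\leq_p y$ iff $p(x,y)\leq p(x,x)$; $x\simeq_p y$ iff $x\leq_p y$ and $y\leq_p x$. Open balls $B^p_\epsilon(x)=\{y\mid p(y,x)<p(x,x)+\epsilon\}$, and $\mathcal O_p(X)$ is the topology of unions of open balls. For PPMs $p,p'$ on $X$, $p\sqsubseteq p'$ means $\mathcal O_{p'}(X)\subseteq\mathcal O_p(X)$. A $\lambda$-theory is an equivalence on $\Lambda$ closed under application on both sides and under $\lambda$-abstraction and containing $\beta$-conversion. A $\lambda$-PPM is a PPM $p$ on $\Lambda$ such that $\simeq_p$ is a $\lambda$-theory and every context $\mathtt C[-]$ induces a map $\Lambda\to\Lambda$ continuous for $\mathcal O_p(\Lambda)$.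 It is sensible if every unsolvable term $M$ satisfies $M\leq_p N$ for all $N$, and no solvable term has this property. *)

theory Defs
  imports Main "HOL-Library.Extended_Nonnegative_Real"
begin

datatype lterm = Var nat | App lterm lterm | Abs lterm

primrec lift :: "lterm \<Rightarrow> nat \<Rightarrow> lterm" where
  "lift (Var i) k = (if i < k then Var i else Var (Suc i))"
| "lift (App s t) k = App (lift s k) (lift t k)"
| "lift (Abs s) k = Abs (lift s (Suc k))"

primrec subst :: "lterm \<Rightarrow> lterm \<Rightarrow> nat \<Rightarrow> lterm" where
  "subst (Var i) t k = (if k < i then Var (i - 1) else if i = k then t else Var i)"
| "subst (App s u) t k = App (subst s t k) (subst u t k)"
| "subst (Abs s) t k = Abs (subst s (lift t 0) (Suc k))"

inductive beta :: "lterm \<Rightarrow> lterm \<Rightarrow> bool" where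
  beta_redex: "beta (App (Abs s) t) (subst s t 0)"
| beta_appL: "beta s s' \<Longrightarrow> beta (App s t) (App s' t)"
| beta_appR: "beta t t' \<Longrightarrow> beta (App s t) (App s t')"
| beta_abs: "beta s s' \<Longrightarrow> beta (Abs s) (Abs s')"

definition beta_conv :: "lterm \<Rightarrow> lterm \<Rightarrow> bool" where
  "beta_conv = equivclp beta"

text \<open>Head normal forms: \<open>\<lambda>x1...xn. y M1 ... Mk\<close>\<close>
inductive head_app :: "lterm \<Rightarrow> bool" where
  "head_app (Var i)"
| "head_app s \<Longrightarrow> head_app (App s t)"

inductive hnf :: "lterm \<Rightarrow> bool" where
  "head_app s \<Longrightarrow> hnf s"
| "hnf s \<Longrightarrow> hnf (Abs s)"

definition solvable :: "lterm \<Rightarrow> bool" where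
  "solvable M \<longleftrightarrow> (\<exists>N. beta_conv M N \<and> hnf N)"

datatype ctx = Hole | CAppL ctx lterm | CAppR lterm ctx | CAbs ctx

primrec plug :: "ctx \<Rightarrow> lterm \<Rightarrow> lterm" where
  "plug Hole M = M"
| "plug (CAppL C t) M = App (plug C M) t"
| "plug (CAppR t C) M = App t (plug C M)"
| "plug (CAbs C) M = Abs (plug C M)"

definition ppm :: "('a \<Rightarrow> 'a \<Rightarrow> ennreal) \<Rightarrow> bool" where
  "ppm p \<longleftrightarrow>
     (\<forall>x y. p x x \<le> p x y) \<and>
     (\<forall>x y. p x y = p y x) \<and>
     (\<forall>x y z. p x y + p z z \<le> p x z + p z y)"

definition ppm_le :: "('a \<Rightarrow> 'a \<Rightarrow> ennreal) \<Rightarrow> 'a \<Rightarrow> 'a \<Rightarrow> bool" where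
  "ppm_le p x y \<longleftrightarrow> p x y \<le> p x x"

definition ppm_eq :: "('a \<Rightarrow> 'a \<Rightarrow> ennreal) \<Rightarrow> 'a \<Rightarrow> 'a \<Rightarrow> bool" where
  "ppm_eq p x y \<longleftrightarrow> ppm_le p x y \<and> ppm_le p y x"

definition ppm_ball :: "('a \<Rightarrow> 'a \<Rightarrow> ennreal) \<Rightarrow> real \<Rightarrow> 'a \<Rightarrow> 'a set" where
  "ppm_ball p \<epsilon> x = {y. p y x < p x x + ennreal \<epsilon>}"

definition ppm_open :: "('a \<Rightarrow> 'a \<Rightarrow> ennreal) \<Rightarrow> 'a set \<Rightarrow> bool" where
  "ppm_open p U \<longleftrightarrow>
     (\<exists>S. S \<subseteq> {ppm_ball p \<epsilon> x | \<epsilon> x. \<epsilon> > 0} \<and> U = \<Union>S)"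

definition ppm_below :: "('a \<Rightarrow> 'a \<Rightarrow> ennreal) \<Rightarrow> ('a \<Rightarrow> 'a \<Rightarrow> ennreal) \<Rightarrow> bool" where
  "ppm_below p p' \<longleftrightarrow> (\<forall>U. ppm_open p' U \<longrightarrow> ppm_open p U)"

definition ppm_continuous :: "('a \<Rightarrow> 'a \<Rightarrow> ennreal) \<Rightarrow> ('a \<Rightarrow> 'a) \<Rightarrow> bool" where
  "ppm_continuous p f \<longleftrightarrow> (\<forall>U. ppm_open p U \<longrightarrow> ppm_open p (f -` U))"

definition lambda_theory :: "(lterm \<Rightarrow> lterm \<Rightarrow> bool) \<Rightarrow> bool" where
  "lambda_theory R \<longleftrightarrow>
     equivp R \<and>
     (\<forall>M N Z. R M N \<longrightarrow> R (App M Z) (App N Z)) \<and>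
     (\<forall>M N Z. R M N \<longrightarrow> R (App Z M) (App Z N)) \<and>
     (\<forall>M N. R M N \<longrightarrow> R (Abs M) (Abs N)) \<and>
     (\<forall>M N. beta_conv M N \<longrightarrow> R M N)"

definition lambda_ppm :: "(lterm \<Rightarrow> lterm \<Rightarrow> ennreal) \<Rightarrow> bool" where
  "lambda_ppm p \<longleftrightarrow>
     ppm p \<and> lambda_theory (ppm_eq p) \<and> (\<forall>C. ppm_continuous p (plug C))"

definition sensible :: "(lterm \<Rightarrow> lterm \<Rightarrow> ennreal) \<Rightarrow> bool" where
  "sensible p \<longleftrightarrow>
     (\<forall>M. \<not> solvable M \<longrightarrow> (\<forall>N. ppm_le p M N)) \<and>
     (\<forall>M. solvable M \<longrightarrow> \<not> (\<forall>N. ppm_le p M N))"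

definition p_ctx :: "(nat \<Rightarrow> ctx) \<Rightarrow> lterm \<Rightarrow> lterm \<Rightarrow> ennreal" where
  "p_ctx Cs M N =
     (\<Sum>n. if \<not> solvable (plug (Cs n) M) \<or> \<not> solvable (plug (Cs n) N)
          then ennreal ((1/2) ^ n) else 0)"

end

theory Submission
  imports Defs
begin

(* In any partial pseudo-metric the elements that are not below everything form an open set,
   since their self-distance is strictly smaller than that of the bottom elements. For a sensible
   lambda-PPM these are exactly the solvable terms, so by continuity of contexts the set of terms
   solvable in finitely many given contexts is open. A ball of the contextual metric around N
   contains every term solvable in those of the first K contexts that solve N, once the tail
   2 * (1/2)^K is smaller than the slack; so every p_ctx-open set is p-open. *)

lemma ennreal_less_imp_add_le:
  fixes a b :: ennreal
  assumes "a < b"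
  shows "\<exists>\<delta>>0. a + ennreal \<delta> \<le> b"
proof -
  obtain a' where a': "a = ennreal a'" "0 \<le> a'"
    using assms by (cases a) auto
  show ?thesis
  proof (cases b)
    case (real b')
    then show ?thesis
      using assms a' by (intro exI[of _ "b' - a'"]) (auto simp flip: ennreal_plus simp: ennreal_less_iff)
  next
    case top
    then show ?thesis by (intro exI[of _ 1]) auto
  qed
qed

lemma geometric_half_tail_sums: "(\<lambda>n. if K \<le> n then (1/2::real)^n else 0) sums (2 * (1/2)^K)"
proof -
  define t where "t = (\<lambda>n. if K \<le> n then (1/2::real)^n else 0)"
  have "(\<lambda>n. (1/2::real)^K * (1/2)^n) sums ((1/2)^K * 2)"
    using sums_mult[OF geometric_sums[of "1/2::real"]] by simp
  then have "(\<lambda>n. t (n + K)) sums ((1/2)^K * 2)"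
    by (simp add: t_def power_add mult.commute)
  then have "t sums ((1/2)^K * 2 + (\<Sum>n<K. t n))"
    by (rule sums_iff_shift[THEN iffD1])
  then show ?thesis
    by (simp add: t_def mult.commute)
qed

lemma ppm_ball_mono: "\<delta> \<le> \<epsilon> \<Longrightarrow> ppm_ball p \<delta> x \<subseteq> ppm_ball p \<epsilon> x"
  unfolding ppm_ball_def using add_left_mono ennreal_leI order_less_le_trans by blast

lemma mem_ppm_ball_self: "p x x < top \<Longrightarrow> 0 < \<epsilon> \<Longrightarrow> x \<in> ppm_ball p \<epsilon> x"
  using ennreal_add_left_cancel_less[of "p x x" 0 "ennreal \<epsilon>"] by (simp add: ppm_ball_def)

context
  fixes p :: "'a \<Rightarrow> 'a \<Rightarrow> ennreal"
  assumes ppm: "ppm p"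
begin

lemma ppm_self_le: "p x x \<le> p x y"
  using ppm by (simp add: ppm_def)

lemma ppm_sym: "p x y = p y x"
  using ppm by (simp add: ppm_def)

lemma ppm_triangle: "p x y + p z z \<le> p x z + p z y"
  using ppm unfolding ppm_def by blast

lemma ppm_self_less_top_if_mem_ball:
  assumes "y \<in> ppm_ball p \<epsilon> x"
  shows "p y y < top"
proof -
  have "p y y < p x x + ennreal \<epsilon>"
    using ppm_self_le[of y x] assms unfolding ppm_ball_def by (blast intro: order.strict_trans1)
  then show ?thesis
    using top_greatest by (rule order.strict_trans2)
qed

lemma ppm_ball_nested:
  assumes "y \<in> ppm_ball p \<epsilon> x"
  shows "\<exists>\<delta>>0. ppm_ball p \<delta> y \<subseteq> ppm_ball p \<epsilon> x"
proof -
  have yx: "p y x < p x x + ennreal \<epsilon>"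
    using assms by (simp add: ppm_ball_def)
  then obtain \<delta> where "\<delta> > 0" and \<delta>: "p y x + ennreal \<delta> \<le> p x x + ennreal \<epsilon>"
    using ennreal_less_imp_add_le by blast
  have "p y x < top"
    using yx top_greatest by (rule order.strict_trans2)
  have "z \<in> ppm_ball p \<epsilon> x" if "z \<in> ppm_ball p \<delta> y" for z
  proof -
    have zy: "p z y < p y y + ennreal \<delta>"
      using that by (simp add: ppm_ball_def)
    have "p y y + p z x \<le> p z y + p y x"
      using ppm_triangle[of z x y] by (simp add: add.commute)
    also have "\<dots> < p y y + ennreal \<delta> + p y x"
      using zy \<open>p y x < top\<close> ennreal_add_left_cancel_less[of "p y x" "p z y" "p y y + ennreal \<delta>"]
      by (simp add: add.commute)
    also have "\<dots> \<le> p y y + (p x x + ennreal \<epsilon>)"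
      using \<delta> by (simp add: add.assoc add.commute add_left_mono)
    finally show ?thesis
      by (simp add: ppm_ball_def ennreal_add_left_cancel_less)
  qed
  with \<open>\<delta> > 0\<close> show ?thesis by blast
qed

lemma ppm_open_iff:
  "ppm_open p U \<longleftrightarrow> (\<forall>y\<in>U. p y y < top \<and> (\<exists>\<delta>>0. ppm_ball p \<delta> y \<subseteq> U))"
proof
  assume "ppm_open p U"
  then obtain S where S: "S \<subseteq> {ppm_ball p \<epsilon> x | \<epsilon> x. \<epsilon> > 0}" "U = \<Union>S"
    unfolding ppm_open_def by blast
  show "\<forall>y\<in>U. p y y < top \<and> (\<exists>\<delta>>0. ppm_ball p \<delta> y \<subseteq> U)"
  proof
    fix y assume "y \<in> U"
    then obtain \<epsilon> x where y: "y \<in> ppm_ball p \<epsilon> x" and "ppm_ball p \<epsilon> x \<subseteq> U"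
      using S by blast
    then show "p y y < top \<and> (\<exists>\<delta>>0. ppm_ball p \<delta> y \<subseteq> U)"
      using ppm_self_less_top_if_mem_ball ppm_ball_nested by blast
  qed
next
  assume U: "\<forall>y\<in>U. p y y < top \<and> (\<exists>\<delta>>0. ppm_ball p \<delta> y \<subseteq> U)"
  define S where "S = {B. B \<subseteq> U \<and> (\<exists>\<delta> y. \<delta> > 0 \<and> B = ppm_ball p \<delta> y)}"
  have "U \<subseteq> \<Union>S"
  proof
    fix y assume "y \<in> U"
    then obtain \<delta> where "\<delta> > 0" "ppm_ball p \<delta> y \<subseteq> U" "p y y < top"
      using U by blast
    then show "y \<in> \<Union>S"
      unfolding S_def using mem_ppm_ball_self[of p y \<delta>] by blast
  qed
  then have "U = \<Union>S"
    unfolding S_def by blast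
  moreover have "S \<subseteq> {ppm_ball p \<epsilon> x | \<epsilon> x. \<epsilon> > 0}"
    unfolding S_def by blast
  ultimately show "ppm_open p U"
    unfolding ppm_open_def by blast
qed

lemma ppm_open_Int:
  assumes "ppm_open p U" "ppm_open p V"
  shows "ppm_open p (U \<inter> V)"
  unfolding ppm_open_iff
proof
  fix y assume "y \<in> U \<inter> V"
  then obtain \<delta> \<delta>' where "p y y < top" "\<delta> > 0" "ppm_ball p \<delta> y \<subseteq> U" "\<delta>' > 0" "ppm_ball p \<delta>' y \<subseteq> V"
    using assms unfolding ppm_open_iff by blast
  then show "p y y < top \<and> (\<exists>\<delta>>0. ppm_ball p \<delta> y \<subseteq> U \<inter> V)"
    using ppm_ball_mono[of "min \<delta> \<delta>'" \<delta> p y] ppm_ball_mono[of "min \<delta> \<delta>'" \<delta>' p y]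
    by (intro conjI exI[of _ "min \<delta> \<delta>'"]) auto
qed

lemma ppm_open_Inter:
  assumes "ppm_open p UNIV" "finite F" "\<And>U. U \<in> F \<Longrightarrow> ppm_open p U"
  shows "ppm_open p (\<Inter>F)"
  using assms(2,3) by (induction F rule: finite_induct) (simp_all add: assms(1) ppm_open_Int)

lemma ppm_bottom_eq:
  assumes "\<forall>y. ppm_le p x y" "\<forall>y. ppm_le p x' y"
  shows "p x z = p x' z'"
proof -
  have const: "p u v = p u u" if "\<forall>y. ppm_le p u y" for u v
    using that ppm_self_le[of u v] by (simp add: ppm_le_def order_antisym)
  have "p x z = p x x'"
    using const[OF assms(1), of z] const[OF assms(1), of x'] by simp
  also have "\<dots> = p x' z'"
    using const[OF assms(2), of x] const[OF assms(2), of z'] ppm_sym[of x x'] by simp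
  finally show ?thesis .
qed

lemma ppm_self_less_bottom:
  assumes "\<forall>y. ppm_le p x y" and "\<not> ppm_le p m n"
  shows "p m m < p x x"
proof -
  have mx: "p m x = p x x" and xn: "p x n = p x x"
    using ppm_bottom_eq[OF assms(1,1)] ppm_sym by metis+
  have le: "p m m \<le> p x x"
    using ppm_self_le[of m x] mx by simp
  have "p m n \<le> p x x" if eq: "p m m = p x x"
  proof -
    have "p x x + p m n \<le> p x x + p x x"
      using ppm_triangle[of m n x] mx xn by (simp add: add.commute)
    moreover have "p x x \<noteq> top"
      using assms(2) eq by (auto simp: ppm_le_def)
    ultimately show ?thesis
      by (simp add: ennreal_add_left_cancel_le)
  qed
  then show ?thesis
    using le assms(2) by (auto simp: ppm_le_def order_le_less)
qed

lemma ppm_open_not_bottom: "ppm_open p {x. \<exists>y. \<not> ppm_le p x y}"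
  unfolding ppm_open_iff
proof
  fix m assume "m \<in> {x. \<exists>y. \<not> ppm_le p x y}"
  then obtain n where n: "\<not> ppm_le p m n" by blast
  then have "p m m < top"
    unfolding ppm_le_def using top_greatest by (blast intro: order.strict_trans2 not_le_imp_less)
  moreover have "\<exists>\<delta>>0. ppm_ball p \<delta> m \<subseteq> {x. \<exists>y. \<not> ppm_le p x y}"
  proof (cases "\<exists>x. \<forall>y. ppm_le p x y")
    case False
    then show ?thesis by (intro exI[of _ 1]) auto
  next
    case True
    then obtain x where x: "\<forall>y. ppm_le p x y" by blast
    obtain \<delta> where "\<delta> > 0" and \<delta>: "p m m + ennreal \<delta> \<le> p x x"
      using ennreal_less_imp_add_le[OF ppm_self_less_bottom[OF x n]] by blast
    have "\<not> (\<forall>y. ppm_le p z y)" if "z \<in> ppm_ball p \<delta> m" for z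
    proof
      assume "\<forall>y. ppm_le p z y"
      then have "p z m = p x x"
        using ppm_bottom_eq x by blast
      then show False
        using that \<delta> by (simp add: ppm_ball_def)
    qed
    with \<open>\<delta> > 0\<close> show ?thesis by blast
  qed
  ultimately show "p m m < top \<and> (\<exists>\<delta>>0. ppm_ball p \<delta> m \<subseteq> {x. \<exists>y. \<not> ppm_le p x y})" ..
qed

lemma ppm_belowI:
  assumes "\<And>\<epsilon> x y. y \<in> ppm_ball q \<epsilon> x \<Longrightarrow> \<exists>W. ppm_open p W \<and> y \<in> W \<and> W \<subseteq> ppm_ball q \<epsilon> x"
  shows "ppm_below p q"
  unfolding ppm_below_def
proof (intro allI impI)
  fix U assume "ppm_open q U"
  then obtain S where S: "S \<subseteq> {ppm_ball q \<epsilon> x | \<epsilon> x. \<epsilon> > 0}" "U = \<Union>S"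
    unfolding ppm_open_def by blast
  have "p y y < top \<and> (\<exists>\<delta>>0. ppm_ball p \<delta> y \<subseteq> U)" if "y \<in> U" for y
  proof -
    obtain \<epsilon> x where "y \<in> ppm_ball q \<epsilon> x" "ppm_ball q \<epsilon> x \<subseteq> U"
      using S \<open>y \<in> U\<close> by blast
    then obtain W where "ppm_open p W" "y \<in> W" "W \<subseteq> U"
      using assms by blast
    then show ?thesis
      unfolding ppm_open_iff by blast
  qed
  then show "ppm_open p U"
    unfolding ppm_open_iff by blast
qed

end

(* Abs (Abs (Var 0)) is KI = \<lambda>x y. y in de Bruijn notation. *)
lemma solvable_App_KI: "solvable (App (Abs (Abs (Var 0))) M)"
proof -
  have "beta_conv (App (Abs (Abs (Var 0))) M) (Abs (Var 0))"
    using beta_redex[of "Abs (Var 0)" M] by (simp add: beta_conv_def r_into_equivclp)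
  moreover have "hnf (Abs (Var 0))"
    by (intro hnf.intros head_app.intros)
  ultimately show ?thesis
    unfolding solvable_def by blast
qed

lemma sensible_solvable_iff: "sensible p \<Longrightarrow> solvable M \<longleftrightarrow> (\<exists>N. \<not> ppm_le p M N)"
  unfolding sensible_def by blast

lemma lambda_ppm_open_solvable_plug:
  assumes "lambda_ppm p" "sensible p"
  shows "ppm_open p {M. solvable (plug C M)}"
proof -
  have "ppm p"
    using assms(1) by (simp add: lambda_ppm_def)
  then have "ppm_open p {M. \<exists>N. \<not> ppm_le p M N}"
    by (rule ppm_open_not_bottom)
  then have "ppm_open p (plug C -` {M. \<exists>N. \<not> ppm_le p M N})"
    using assms(1) unfolding lambda_ppm_def ppm_continuous_def by blast
  then show ?thesis
    using sensible_solvable_iff[OF assms(2)] by (simp add: vimage_def)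
qed

lemma lambda_ppm_open_UNIV:
  assumes "lambda_ppm p" "sensible p"
  shows "ppm_open p UNIV"
  using lambda_ppm_open_solvable_plug[OF assms, of "CAppR (Abs (Abs (Var 0))) Hole"]
  by (simp add: solvable_App_KI)

lemma lambda_ppm_open_solvable_all:
  assumes "lambda_ppm p" "sensible p" "finite F"
  shows "ppm_open p {M. \<forall>C\<in>F. solvable (plug C M)}"
proof -
  have "ppm_open p (\<Inter>C\<in>F. {M. solvable (plug C M)})"
    using assms(1) lambda_ppm_open_UNIV[OF assms(1,2)] assms(3)
      lambda_ppm_open_solvable_plug[OF assms(1,2)]
    by (auto simp: lambda_ppm_def intro!: ppm_open_Inter)
  then show ?thesis
    by (simp add: INTER_eq)
qed

lemma p_ctx_le_tail:
  assumes "\<forall>n<K. solvable (plug (Cs n) N) \<longrightarrow> solvable (plug (Cs n) M)"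
  shows "p_ctx Cs M L \<le> p_ctx Cs N L + ennreal (2 * (1/2)^K)"
proof -
  define tail where "tail n = ennreal (if K \<le> n then (1/2)^n else 0)" for n
  have "p_ctx Cs M L \<le> (\<Sum>n. (if \<not> solvable (plug (Cs n) N) \<or> \<not> solvable (plug (Cs n) L)
                                then ennreal ((1/2)^n) else 0) + tail n)"
    unfolding p_ctx_def tail_def using assms by (intro suminf_le) auto
  also have "\<dots> = p_ctx Cs N L + suminf tail"
    by (simp add: p_ctx_def suminf_add)
  also have "suminf tail = ennreal (2 * (1/2)^K)"
    unfolding tail_def by (rule suminf_ennreal_eq) (simp_all add: geometric_half_tail_sums)
  finally show ?thesis .
qed

lemma p_ctx_ball_contains_solvable_prefix:
  assumes "N \<in> ppm_ball (p_ctx Cs) \<epsilon> L"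
  obtains K where "\<And>M. \<forall>n<K. solvable (plug (Cs n) N) \<longrightarrow> solvable (plug (Cs n) M)
                      \<Longrightarrow> M \<in> ppm_ball (p_ctx Cs) \<epsilon> L"
proof -
  have NL: "p_ctx Cs N L < p_ctx Cs L L + ennreal \<epsilon>"
    using assms by (simp add: ppm_ball_def)
  then obtain \<delta> where "\<delta> > 0" and \<delta>: "p_ctx Cs N L + ennreal \<delta> \<le> p_ctx Cs L L + ennreal \<epsilon>"
    using ennreal_less_imp_add_le by blast
  obtain K where K: "(1/2::real)^K < \<delta> / 2"
    using real_arch_pow_inv[of "\<delta> / 2" "1/2::real"] \<open>\<delta> > 0\<close> by auto
  have "p_ctx Cs N L < top"
    using NL top_greatest by (rule order.strict_trans2)
  have "M \<in> ppm_ball (p_ctx Cs) \<epsilon> L"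
    if "\<forall>n<K. solvable (plug (Cs n) N) \<longrightarrow> solvable (plug (Cs n) M)" for M
  proof -
    have "p_ctx Cs M L \<le> p_ctx Cs N L + ennreal (2 * (1/2)^K)"
      using that by (rule p_ctx_le_tail)
    also have "\<dots> < p_ctx Cs N L + ennreal \<delta>"
      using K \<open>\<delta> > 0\<close> \<open>p_ctx Cs N L < top\<close>
      by (simp add: ennreal_add_left_cancel_less ennreal_lessI mult.commute)
    also have "\<dots> \<le> p_ctx Cs L L + ennreal \<epsilon>"
      by (rule \<delta>)
    finally show ?thesis
      by (simp add: ppm_ball_def)
  qed
  then show ?thesis
    by (rule that)
qed

theorem mainTheorem3:
  fixes p :: "lterm \<Rightarrow> lterm \<Rightarrow> ennreal" and Cs :: "nat \<Rightarrow> ctx"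
  assumes "lambda_ppm p" and "sensible p" and "bij Cs"
  shows "ppm_below p (p_ctx Cs)"
proof (rule ppm_belowI)
  show "ppm p"
    using assms(1) by (simp add: lambda_ppm_def)
  fix \<epsilon> L N
  assume "N \<in> ppm_ball (p_ctx Cs) \<epsilon> L"
  then obtain K where K: "\<And>M. \<forall>n<K. solvable (plug (Cs n) N) \<longrightarrow> solvable (plug (Cs n) M)
                              \<Longrightarrow> M \<in> ppm_ball (p_ctx Cs) \<epsilon> L"
    by (elim p_ctx_ball_contains_solvable_prefix) blast
  define F where "F = {C \<in> Cs ` {..<K}. solvable (plug C N)}"
  define W where "W = {M. \<forall>C\<in>F. solvable (plug C M)}"
  have "ppm_open p W"
    unfolding W_def using assms(1,2) by (rule lambda_ppm_open_solvable_all) (simp add: F_def)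
  moreover have "N \<in> W"
    by (simp add: W_def F_def)
  moreover have "W \<subseteq> ppm_ball (p_ctx Cs) \<epsilon> L"
    using K by (auto simp: W_def F_def)
  ultimately show "\<exists>W. ppm_open p W \<and> N \<in> W \<and> W \<subseteq> ppm_ball (p_ctx Cs) \<epsilon> L"
    by blast
qed

end
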